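(* Let $n\ge 1$, let $g\in C(\mathbb{R}^n)\cap L^\infty(\mathbb{R}^n)$ be nonnegative and not identically zero, and let $$u(x,t)=\frac{1}{(4\pi t)^{n/2}}\int_{\mathbb{R}^n} g(y)\,e^{-\frac{|x-y|^2}{4t}}\,dy,\qquad x\in\mathbb{R}^n,\ t>0.$$ Let $\alpha,\beta,\gamma$ be nonnegative constants with $(n-1)(\alpha+\beta)+\gamma\le 1$. Then for all $x\in\mathbb{R}^n$ and $t>0$, $$\frac{\Delta u}{u}-\alpha\sum_{\substack{i,j=1\\ i\neq j}}^{n}\frac{u_{x_ix_j}}{u}-\beta\sum_{\substack{i,j=1\\ i\neq j}}^{n}\frac{u_{x_i}u_{x_j}}{u^2}-\gamma\frac{|\nabla u|^2}{u^2}\ \ge\ -\frac{n}{2t},$$ where all functions are evaluated at $(x,t)$.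
   Context: $u$ is the solution of the heat equation $u_t=\Delta u$ on $\mathbb{R}^n\times(0,\infty)$ given by the heat-kernel representation formula with initial datum $g$; it is smooth and strictly positive for $t>0$. Subscripts denote partial derivatives in the spatial variables, $\Delta u=\sum_{i=1}^n u_{x_ix_i}$ and $|\nabla u|^2=\sum_{i=1}^n u_{x_i}^2$. Sums over $i\ne j$ run over all ordered pairs $(i,j)$ with $i,j\in\{1,\dots,n\}$, $i\neq j$ (empty when $n=1$). *)

theory Defs
  imports "HOL-Analysis.Analysis"
begin

definition heat_sol :: "(real^'n \<Rightarrow> real) \<Rightarrow> real^'n \<Rightarrow> real \<Rightarrow> real" where
  "heat_sol g x t =
     (1 / (4 * pi * t) powr (real CARD('n) / 2)) *
     (\<integral>y. g y * exp (- (norm (x - y))\<^sup>2 / (4 * t)) \<partial>lborel)"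

definition pd :: "'n \<Rightarrow> (real^'n \<Rightarrow> real) \<Rightarrow> real^'n \<Rightarrow> real" where
  "pd i f x = deriv (\<lambda>s. f (x + s *\<^sub>R axis i 1)) 0"

end

(*
  Differentiating under the integral sign, u, its gradient and its Hessian at (x, t) are, up to
  the common factor (4 pi t)^(-n/2), the moments M = int w, m_i = int w b_i and
  S_ij - delta_ij M / (2t) of the nonnegative weight w(y) = g(y) exp(-|x - y|^2 / (4t)),
  where b = (y - x) / (2t) and S_ij = int w b_i b_j.  The shift by delta_ij M / (2t) contributes
  exactly -n / (2t), so it remains to show that the quotient built from M, m and S is nonnegative.
  The matrix C with 1 on the diagonal and -alpha off it is positive semidefinite when
  (n - 1) alpha <= 1; integrating its quadratic form at b - m / M against w gives
  m' C m <= M tr (C S).  The beta and gamma terms are then absorbed using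
  sum_(i ~= j) m_i m_j <= (n - 1) |m|^2 and (n - 1)(alpha + beta) + gamma <= 1.
*)

theory Submission
  imports Defs "HOL-Probability.Distributions"
begin

section \<open>The Li--Yau quotient\<close>

definition li_yau_quotient ::
  "real \<Rightarrow> real \<Rightarrow> real \<Rightarrow> real \<Rightarrow> ('n::finite \<Rightarrow> real) \<Rightarrow> ('n \<Rightarrow> 'n \<Rightarrow> real) \<Rightarrow> real" where
  "li_yau_quotient \<alpha> \<beta> \<gamma> u Du D2u =
     (\<Sum>i\<in>UNIV. D2u i i) / u
     - \<alpha> * (\<Sum>i\<in>UNIV. \<Sum>j\<in>UNIV - {i}. D2u i j / u)
     - \<beta> * (\<Sum>i\<in>UNIV. \<Sum>j\<in>UNIV - {i}. Du i * Du j / u\<^sup>2)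
     - \<gamma> * (\<Sum>i\<in>UNIV. (Du i)\<^sup>2) / u\<^sup>2"

lemma li_yau_quotient_scale:
  assumes "c \<noteq> 0"
  shows "li_yau_quotient \<alpha> \<beta> \<gamma> (c * u) (\<lambda>i. c * Du i) (\<lambda>i j. c * D2u i j)
    = li_yau_quotient \<alpha> \<beta> \<gamma> u Du D2u"
proof -
  have "c * x / (c * u) = x / u" for x
    using assms by simp
  moreover have "c * a * (c * b) / (c * u)\<^sup>2 = a * b / u\<^sup>2" for a b
    using assms by (simp add: power2_eq_square)
  moreover have "\<gamma> * (\<Sum>i\<in>UNIV. (c * Du i)\<^sup>2) / (c * u)\<^sup>2 = \<gamma> * (\<Sum>i\<in>UNIV. (Du i)\<^sup>2) / u\<^sup>2"
    using assms by (simp add: power_mult_distrib sum_distrib_left[symmetric])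
  ultimately show ?thesis
    by (simp add: li_yau_quotient_def sum_distrib_left[symmetric])
qed

lemma li_yau_quotient_diag_shift:
  fixes D2u :: "'n::finite \<Rightarrow> 'n \<Rightarrow> real"
  assumes "u \<noteq> 0"
  shows "li_yau_quotient \<alpha> \<beta> \<gamma> u Du (\<lambda>i j. D2u i j - (if i = j then s * u else 0))
    = li_yau_quotient \<alpha> \<beta> \<gamma> u Du D2u - real CARD('n) * s"
proof -
  have "(\<Sum>i\<in>UNIV. D2u i i - s * u) / u = (\<Sum>i\<in>UNIV. D2u i i) / u - real CARD('n) * s"
    using assms by (simp add: sum_subtractf diff_divide_distrib)
  moreover have "(\<Sum>j\<in>UNIV - {i}. (D2u i j - (if i = j then s * u else 0)) / u)
      = (\<Sum>j\<in>UNIV - {i}. D2u i j / u)" for i :: 'n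
    by (rule sum.cong) auto
  ultimately show ?thesis
    by (simp add: li_yau_quotient_def)
qed

lemma sum_offdiag_mult_eq:
  fixes v :: "'n::finite \<Rightarrow> real"
  shows "(\<Sum>i\<in>UNIV. \<Sum>j\<in>UNIV - {i}. v i * v j) = (\<Sum>i\<in>UNIV. v i)\<^sup>2 - (\<Sum>i\<in>UNIV. (v i)\<^sup>2)"
proof -
  have "(\<Sum>j\<in>UNIV - {i}. v i * v j) = v i * (\<Sum>j\<in>UNIV. v j) - (v i)\<^sup>2" for i
    by (simp add: sum_distrib_left sum_diff1 power2_eq_square)
  then show ?thesis
    by (simp add: sum_subtractf sum_distrib_right[symmetric] power2_eq_square)
qed

lemma sum_offdiag_mult_le:
  fixes v :: "'n::finite \<Rightarrow> real"
  shows "(\<Sum>i\<in>UNIV. \<Sum>j\<in>UNIV - {i}. v i * v j) \<le> (real CARD('n) - 1) * (\<Sum>i\<in>UNIV. (v i)\<^sup>2)"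
  using sum_squared_le_sum_of_squares[of v UNIV] unfolding sum_offdiag_mult_eq
  by (simp add: algebra_simps)

lemma sum_sum_diag_offdiag:
  fixes f :: "'n::finite \<Rightarrow> 'n \<Rightarrow> real"
  shows "(\<Sum>i\<in>UNIV. \<Sum>j\<in>UNIV. (if i = j then 1 else - \<alpha>) * f i j)
       = (\<Sum>i\<in>UNIV. f i i) - \<alpha> * (\<Sum>i\<in>UNIV. \<Sum>j\<in>UNIV - {i}. f i j)"
proof -
  have "(\<Sum>j\<in>UNIV. (if i = j then 1 else - \<alpha>) * f i j) = f i i - \<alpha> * (\<Sum>j\<in>UNIV - {i}. f i j)" for i
  proof -
    have "(\<Sum>j\<in>UNIV. (if i = j then 1 else - \<alpha>) * f i j)
        = f i i + (\<Sum>j\<in>UNIV - {i}. (if i = j then 1 else - \<alpha>) * f i j)"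
      by (subst sum.remove[of _ i]) auto
    also have "(\<Sum>j\<in>UNIV - {i}. (if i = j then 1 else - \<alpha>) * f i j) = (\<Sum>j\<in>UNIV - {i}. - \<alpha> * f i j)"
      by (rule sum.cong) auto
    finally show ?thesis by (simp add: sum_distrib_left sum_negf)
  qed
  then show ?thesis by (simp add: sum_subtractf sum_distrib_left)
qed

lemma offdiag_quadratic_form_nonneg:
  fixes v :: "'n::finite \<Rightarrow> real"
  assumes "\<alpha> \<ge> 0" "(real CARD('n) - 1) * \<alpha> \<le> 1"
  shows "0 \<le> (\<Sum>i\<in>UNIV. \<Sum>j\<in>UNIV. (if i = j then 1 else - \<alpha>) * (v i * v j))"
proof -
  have "\<alpha> * (\<Sum>i\<in>UNIV. \<Sum>j\<in>UNIV - {i}. v i * v j) \<le> \<alpha> * (real CARD('n) - 1) * (\<Sum>i\<in>UNIV. (v i)\<^sup>2)"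
    using mult_left_mono[OF sum_offdiag_mult_le assms(1)] by (simp add: mult.assoc)
  also have "\<dots> \<le> (\<Sum>i\<in>UNIV. (v i)\<^sup>2)"
    using mult_right_mono[OF assms(2), of "\<Sum>i\<in>UNIV. (v i)\<^sup>2"] by (simp add: sum_nonneg mult.commute)
  finally show ?thesis
    unfolding sum_sum_diag_offdiag by (simp add: power2_eq_square)
qed

lemma li_yau_quotient_nonneg:
  fixes m :: "'n::finite \<Rightarrow> real"
  assumes M: "M > 0"
    and offdiag_form_le: "(\<Sum>i\<in>UNIV. (m i)\<^sup>2) - \<alpha> * (\<Sum>i\<in>UNIV. \<Sum>j\<in>UNIV - {i}. m i * m j)
      \<le> M * ((\<Sum>i\<in>UNIV. S i i) - \<alpha> * (\<Sum>i\<in>UNIV. \<Sum>j\<in>UNIV - {i}. S i j))"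
    and "\<alpha> \<ge> 0" "\<beta> \<ge> 0" "\<gamma> \<ge> 0" "(real CARD('n) - 1) * (\<alpha> + \<beta>) + \<gamma> \<le> 1"
  shows "0 \<le> li_yau_quotient \<alpha> \<beta> \<gamma> M m S"
proof -
  define Q where "Q = (\<Sum>i\<in>UNIV. (m i)\<^sup>2)"
  define P where "P = (\<Sum>i\<in>UNIV. \<Sum>j\<in>UNIV - {i}. m i * m j)"
  have "(\<alpha> + \<beta>) * P \<le> (\<alpha> + \<beta>) * ((real CARD('n) - 1) * Q)"
    unfolding P_def Q_def using assms(3,4) by (intro mult_left_mono sum_offdiag_mult_le) auto
  moreover have "0 \<le> (1 - (real CARD('n) - 1) * (\<alpha> + \<beta>) - \<gamma>) * Q"
    using assms(6) unfolding Q_def by (simp add: sum_nonneg)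
  ultimately have "0 \<le> M * ((\<Sum>i\<in>UNIV. S i i) - \<alpha> * (\<Sum>i\<in>UNIV. \<Sum>j\<in>UNIV - {i}. S i j)) - \<beta> * P - \<gamma> * Q"
    using offdiag_form_le unfolding P_def[symmetric] Q_def[symmetric] by (simp add: algebra_simps)
  also have "\<dots> = M\<^sup>2 * li_yau_quotient \<alpha> \<beta> \<gamma> M m S"
    using M unfolding li_yau_quotient_def P_def Q_def
    by (simp add: sum_divide_distrib[symmetric] field_simps power2_eq_square)
  finally show ?thesis
    using M by (simp add: zero_le_mult_iff)
qed

section \<open>A weighted moment inequality\<close>

lemma integral_weighted_shifted_mult:
  fixes w f h :: "'a \<Rightarrow> real"
  assumes "integrable M w" "integrable M (\<lambda>y. w y * f y)" "integrable M (\<lambda>y. w y * h y)"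
    and "integrable M (\<lambda>y. w y * (f y * h y))"
  shows "integrable M (\<lambda>y. w y * ((f y - a) * (h y - b)))"
    and "(\<integral>y. w y * ((f y - a) * (h y - b)) \<partial>M)
      = (\<integral>y. w y * (f y * h y) \<partial>M) - b * (\<integral>y. w y * f y \<partial>M) - a * (\<integral>y. w y * h y \<partial>M)
        + a * b * (\<integral>y. w y \<partial>M)"
proof -
  have expand: "w y * ((f y - a) * (h y - b))
      = w y * (f y * h y) - b * (w y * f y) - a * (w y * h y) + a * b * w y" for y
    by (simp add: algebra_simps)
  show "integrable M (\<lambda>y. w y * ((f y - a) * (h y - b)))"
    unfolding expand using assms by auto
  show "(\<integral>y. w y * ((f y - a) * (h y - b)) \<partial>M)
      = (\<integral>y. w y * (f y * h y) \<partial>M) - b * (\<integral>y. w y * f y \<partial>M) - a * (\<integral>y. w y * h y \<partial>M)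
        + a * b * (\<integral>y. w y \<partial>M)"
    unfolding expand using assms by simp
qed

lemma weighted_quadratic_form_le:
  fixes w :: "'a \<Rightarrow> real" and b :: "'a \<Rightarrow> 'n::finite \<Rightarrow> real" and C :: "'n \<Rightarrow> 'n \<Rightarrow> real"
  assumes psd: "\<And>v. 0 \<le> (\<Sum>i\<in>UNIV. \<Sum>j\<in>UNIV. C i j * (v i * v j))"
    and w0: "\<And>y. w y \<ge> 0" and W: "(\<integral>y. w y \<partial>M) > 0"
    and iw: "integrable M w" and ib: "\<And>i. integrable M (\<lambda>y. w y * b y i)"
    and ibb: "\<And>i j. integrable M (\<lambda>y. w y * (b y i * b y j))"
  shows "(\<Sum>i\<in>UNIV. \<Sum>j\<in>UNIV. C i j * ((\<integral>y. w y * b y i \<partial>M) * (\<integral>y. w y * b y j \<partial>M)))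
    \<le> (\<integral>y. w y \<partial>M) * (\<Sum>i\<in>UNIV. \<Sum>j\<in>UNIV. C i j * (\<integral>y. w y * (b y i * b y j) \<partial>M))"
proof -
  define W where "W = (\<integral>y. w y \<partial>M)"
  define m where "m i = (\<integral>y. w y * b y i \<partial>M)" for i
  define S where "S i j = (\<integral>y. w y * (b y i * b y j) \<partial>M)" for i j
  define c where "c y i j = w y * ((b y i - m i / W) * (b y j - m j / W))" for y i j
  have W0: "W \<noteq> 0" using W by (simp add: W_def)
  have integrable_c: "integrable M (\<lambda>y. c y i j)" for i j
    unfolding c_def by (rule integral_weighted_shifted_mult(1)[OF iw ib ib ibb])
  have integral_c: "(\<integral>y. c y i j \<partial>M) = S i j - m i * m j / W" for i j
    unfolding c_def integral_weighted_shifted_mult(2)[OF iw ib ib ibb]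
    using W0 by (simp add: W_def[symmetric] m_def[symmetric] S_def[symmetric] field_simps)
  have "(\<Sum>i\<in>UNIV. \<Sum>j\<in>UNIV. C i j * c y i j)
      = w y * (\<Sum>i\<in>UNIV. \<Sum>j\<in>UNIV. C i j * ((b y i - m i / W) * (b y j - m j / W)))" for y
    by (simp add: c_def sum_distrib_left mult.left_commute)
  then have "0 \<le> (\<integral>y. (\<Sum>i\<in>UNIV. \<Sum>j\<in>UNIV. C i j * c y i j) \<partial>M)"
    by (simp add: integral_nonneg_AE w0 psd)
  also have "\<dots> = (\<Sum>i\<in>UNIV. \<Sum>j\<in>UNIV. C i j * (S i j - m i * m j / W))"
    using integrable_c integral_c by (simp add: integral_sum integrable_sum)
  also have "\<dots> = (\<Sum>i\<in>UNIV. \<Sum>j\<in>UNIV. C i j * S i j) - (\<Sum>i\<in>UNIV. \<Sum>j\<in>UNIV. C i j * (m i * m j)) / W"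
    by (simp add: right_diff_distrib sum_subtractf sum_divide_distrib)
  finally have "(\<Sum>i\<in>UNIV. \<Sum>j\<in>UNIV. C i j * (m i * m j)) / W \<le> (\<Sum>i\<in>UNIV. \<Sum>j\<in>UNIV. C i j * S i j)"
    by simp
  then show ?thesis
    using W unfolding W_def[symmetric] m_def[symmetric] S_def[symmetric] by (simp add: pos_divide_le_eq mult.commute)
qed

lemma weighted_offdiag_form_le:
  fixes w :: "'a \<Rightarrow> real" and b :: "'a \<Rightarrow> 'n::finite \<Rightarrow> real"
  assumes "\<alpha> \<ge> 0" "(real CARD('n) - 1) * \<alpha> \<le> 1"
    and "\<And>y. w y \<ge> 0" "(\<integral>y. w y \<partial>M) > 0"
    and "integrable M w" "\<And>i. integrable M (\<lambda>y. w y * b y i)"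
    and "\<And>i j. integrable M (\<lambda>y. w y * (b y i * b y j))"
  defines "m \<equiv> \<lambda>i. \<integral>y. w y * b y i \<partial>M" and "S \<equiv> \<lambda>i j. \<integral>y. w y * (b y i * b y j) \<partial>M"
  shows "(\<Sum>i\<in>UNIV. (m i)\<^sup>2) - \<alpha> * (\<Sum>i\<in>UNIV. \<Sum>j\<in>UNIV - {i}. m i * m j)
    \<le> (\<integral>y. w y \<partial>M) * ((\<Sum>i\<in>UNIV. S i i) - \<alpha> * (\<Sum>i\<in>UNIV. \<Sum>j\<in>UNIV - {i}. S i j))"
  using weighted_quadratic_form_le[OF offdiag_quadratic_form_nonneg[OF assms(1,2)] assms(3-7)]
  unfolding sum_sum_diag_offdiag m_def S_def by (simp add: power2_eq_square)

lemma li_yau_quotient_moments_nonneg: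
  fixes w :: "'a \<Rightarrow> real" and b :: "'a \<Rightarrow> 'n::finite \<Rightarrow> real"
  assumes "\<alpha> \<ge> 0" "\<beta> \<ge> 0" "\<gamma> \<ge> 0" "(real CARD('n) - 1) * (\<alpha> + \<beta>) + \<gamma> \<le> 1"
    and "\<And>y. w y \<ge> 0" "(\<integral>y. w y \<partial>M) > 0"
    and "integrable M w" "\<And>i. integrable M (\<lambda>y. w y * b y i)"
    and "\<And>i j. integrable M (\<lambda>y. w y * (b y i * b y j))"
  shows "0 \<le> li_yau_quotient \<alpha> \<beta> \<gamma> (\<integral>y. w y \<partial>M)
    (\<lambda>i. \<integral>y. w y * b y i \<partial>M) (\<lambda>i j. \<integral>y. w y * (b y i * b y j) \<partial>M)"
proof -
  have "0 \<le> (real CARD('n) - 1) * \<beta>"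
    using assms(2) by (simp add: Suc_le_eq)
  then have "(real CARD('n) - 1) * \<alpha> \<le> 1"
    using assms(3,4) by (simp add: distrib_left)
  from weighted_offdiag_form_le[OF assms(1) this assms(5-9)]
  show ?thesis
    by (rule li_yau_quotient_nonneg[OF assms(6) _ assms(1-4)])
qed

section \<open>Gaussian integrals and differentiation under the integral sign\<close>

lemma integrable_gaussian_real:
  fixes k a :: real
  assumes k: "k > 0"
  shows "integrable lborel (\<lambda>s. exp (- k * (a - s)\<^sup>2))"
proof -
  define \<sigma> where "\<sigma> = sqrt (1 / (2 * k))"
  have \<sigma>: "\<sigma> > 0" "\<sigma>\<^sup>2 = 1 / (2 * k)"
    using k by (simp_all add: \<sigma>_def)
  have "sqrt (2 * pi * \<sigma>\<^sup>2) * normal_density a \<sigma> s = exp (- k * (a - s)\<^sup>2)" for s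
    using \<sigma> k unfolding normal_density_def by (simp add: power2_commute field_simps)
  moreover have "integrable lborel (\<lambda>s. sqrt (2 * pi * \<sigma>\<^sup>2) * normal_density a \<sigma> s)"
    using integrable_normal_density[OF \<sigma>(1)] by simp
  ultimately show ?thesis
    by simp
qed

lemma integrable_gaussian:
  fixes k :: real and z :: "'a::euclidean_space"
  assumes k: "k > 0"
  shows "integrable lborel (\<lambda>y. exp (- k * (norm (z - y))\<^sup>2))"
proof -
  have factor: "exp (- k * (norm (z - y))\<^sup>2) = (\<Prod>b\<in>Basis. exp (- k * (z \<bullet> b - y \<bullet> b)\<^sup>2))" for y
  proof -
    have "(norm (z - y))\<^sup>2 = (\<Sum>b\<in>Basis. (z \<bullet> b - y \<bullet> b)\<^sup>2)"
      unfolding power2_norm_eq_inner euclidean_inner[of "z - y" "z - y"]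
      by (simp add: inner_diff_left power2_eq_square)
    then show ?thesis
      by (simp add: exp_sum[symmetric] sum_distrib_left sum_negf)
  qed
  have "(\<integral>\<^sup>+y. ennreal (norm (exp (- k * (norm (z - y))\<^sup>2))) \<partial>lborel)
     = (\<integral>\<^sup>+y. (\<Prod>b\<in>Basis. ennreal (exp (- k * (z \<bullet> b - y \<bullet> b)\<^sup>2))) \<partial>lborel)"
    by (intro nn_integral_cong) (subst factor, simp add: prod_ennreal abs_prod)
  also have "\<dots> = (\<Prod>b\<in>Basis. (\<integral>\<^sup>+s. ennreal (exp (- k * (z \<bullet> b - s)\<^sup>2)) \<partial>lborel))"
    by (rule nn_integral_lborel_prod[where f="\<lambda>b s. ennreal (exp (- k * (z \<bullet> b - s)\<^sup>2))"]) auto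
  also have "\<dots> < \<infinity>"
  proof -
    have "(\<integral>\<^sup>+s. ennreal (exp (- k * (z \<bullet> b - s)\<^sup>2)) \<partial>lborel) < \<infinity>" for b
      using integrable_gaussian_real[OF k, of "z \<bullet> b"] unfolding integrable_iff_bounded by simp
    then show ?thesis by (simp add: less_top[symmetric] ennreal_prod_eq_top)
  qed
  finally show ?thesis
    unfolding integrable_iff_bounded by simp
qed

lemma mult_exp_neg_le_one:
  fixes x :: real
  shows "x * exp (- x) \<le> 1"
proof -
  have "x \<le> exp x"
    using exp_ge_add_one_self[of x] by linarith
  then have "x * exp (- x) \<le> exp x * exp (- x)"
    by (intro mult_right_mono) auto
  then show ?thesis
    by (simp add: exp_minus)
qed

lemma integrable_gaussian_mult_square:
  fixes k :: real and z :: "'a::euclidean_space"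
  assumes k: "k > 0"
  shows "integrable lborel (\<lambda>y. exp (- k * (norm (z - y))\<^sup>2) * (1 + norm (z - y))\<^sup>2)"
proof (rule Bochner_Integration.integrable_bound)
  show "integrable lborel (\<lambda>y. (2 + 4 / k) * exp (- (k / 2) * (norm (z - y))\<^sup>2))"
    using integrable_gaussian[of "k / 2" z] k by simp
  show "AE y in lborel. norm (exp (- k * (norm (z - y))\<^sup>2) * (1 + norm (z - y))\<^sup>2)
      \<le> norm ((2 + 4 / k) * exp (- (k / 2) * (norm (z - y))\<^sup>2))"
  proof (rule AE_I2)
    fix y
    define r where "r = norm (z - y)"
    define e where "e = exp (- (k / 2) * r\<^sup>2)"
    have "r\<^sup>2 * e \<le> 2 / k"
      using mult_exp_neg_le_one[of "k / 2 * r\<^sup>2"] k by (simp add: e_def field_simps)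
    moreover have "(1 + r)\<^sup>2 \<le> 2 + 2 * r\<^sup>2"
      using zero_le_power2[of "r - 1"] by (simp add: power2_eq_square algebra_simps)
    moreover have "exp (- k * r\<^sup>2) = e * e" "e \<le> 1" "e \<ge> 0"
      using k by (simp_all add: e_def exp_add[symmetric])
    ultimately have "exp (- k * r\<^sup>2) * (1 + r)\<^sup>2 \<le> e * e * (2 + 2 * r\<^sup>2)"
      by (simp add: mult_left_mono)
    also have "\<dots> = e * (2 * e + 2 * (r\<^sup>2 * e))"
      by (simp add: algebra_simps)
    also have "\<dots> \<le> e * (2 + 4 / k)"
    proof (rule mult_left_mono)
      have "2 * (r\<^sup>2 * e) \<le> 2 * (2 / k)"
        using \<open>r\<^sup>2 * e \<le> 2 / k\<close> by simp
      then show "2 * e + 2 * (r\<^sup>2 * e) \<le> 2 + 4 / k"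
        using \<open>e \<le> 1\<close> by simp
    qed (rule \<open>e \<ge> 0\<close>)
    finally show "norm (exp (- k * (norm (z - y))\<^sup>2) * (1 + norm (z - y))\<^sup>2)
        \<le> norm ((2 + 4 / k) * exp (- (k / 2) * (norm (z - y))\<^sup>2))"
      using k by (simp add: r_def e_def mult.commute)
  qed
qed measurable

lemma abs_diff_le_of_deriv_bound:
  fixes f f' :: "real \<Rightarrow> real"
  assumes der: "\<And>s. (f has_real_derivative f' s) (at s)"
    and bnd: "\<And>s. \<bar>s\<bar> \<le> 1 \<Longrightarrow> \<bar>f' s\<bar> \<le> G"
    and h: "\<bar>h\<bar> \<le> 1"
  shows "\<bar>f h - f 0\<bar> \<le> \<bar>h\<bar> * G"
proof -
  consider "h = 0" | "h > 0" | "h < 0"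
    by linarith
  then have "\<exists>\<xi>. \<bar>\<xi>\<bar> \<le> 1 \<and> f h - f 0 = h * f' \<xi>"
  proof cases
    case 1
    then show ?thesis
      by (intro exI[of _ 0]) simp
  next
    case 2
    with MVT2[of 0 h f f'] der obtain \<xi> where "0 < \<xi>" "\<xi> < h" "f h - f 0 = (h - 0) * f' \<xi>"
      by blast
    then show ?thesis
      using h by (intro exI[of _ \<xi>]) auto
  next
    case 3
    with MVT2[of h 0 f f'] der obtain \<xi> where "h < \<xi>" "\<xi> < 0" "f 0 - f h = (0 - h) * f' \<xi>"
      by blast
    then show ?thesis
      using h by (intro exI[of _ \<xi>]) (auto simp: algebra_simps)
  qed
  then obtain \<xi> where "\<bar>\<xi>\<bar> \<le> 1" "f h - f 0 = h * f' \<xi>"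
    by blast
  then show ?thesis
    using mult_left_mono[OF bnd, of \<xi> "\<bar>h\<bar>"] by (simp add: abs_mult)
qed

lemma integrable_of_deriv_bound:
  fixes F F' :: "real \<Rightarrow> 'a \<Rightarrow> real" and G :: "'a \<Rightarrow> real"
  assumes der: "\<And>s y. ((\<lambda>s. F s y) has_real_derivative F' s y) (at s)"
    and bnd: "\<And>s y. \<bar>s\<bar> \<le> 1 \<Longrightarrow> \<bar>F' s y\<bar> \<le> G y"
    and "F h \<in> borel_measurable M" "integrable M (F 0)" "integrable M G" and h: "\<bar>h\<bar> \<le> 1"
  shows "integrable M (F h)"
proof (rule Bochner_Integration.integrable_bound[where f="\<lambda>y. \<bar>F 0 y\<bar> + G y"])
  show "AE y in M. norm (F h y) \<le> norm (\<bar>F 0 y\<bar> + G y)"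
  proof (rule AE_I2)
    fix y
    have "\<bar>F h y - F 0 y\<bar> \<le> \<bar>h\<bar> * G y"
      by (rule abs_diff_le_of_deriv_bound[OF der bnd h])
    also have "\<dots> \<le> G y"
      using h bnd[of 0 y] by (simp add: mult_left_le_one_le)
    finally show "norm (F h y) \<le> norm (\<bar>F 0 y\<bar> + G y)"
      by simp
  qed
qed (use assms in auto)

lemma has_real_derivative_integral:
  fixes F F' :: "real \<Rightarrow> 'a \<Rightarrow> real" and G :: "'a \<Rightarrow> real"
  assumes der: "\<And>s y. ((\<lambda>s. F s y) has_real_derivative F' s y) (at s)"
    and meas: "\<And>s. F s \<in> borel_measurable M" and meas': "F' 0 \<in> borel_measurable M"
    and intF: "integrable M (F 0)" and intG: "integrable M G"
    and bnd: "\<And>s y. \<bar>s\<bar> \<le> 1 \<Longrightarrow> \<bar>F' s y\<bar> \<le> G y"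
  shows "((\<lambda>s. \<integral>y. F s y \<partial>M) has_real_derivative (\<integral>y. F' 0 y \<partial>M)) (at 0)"
  unfolding has_field_derivative_iff tendsto_at_iff_sequentially
proof (intro allI impI)
  fix X :: "nat \<Rightarrow> real"
  assume X0: "\<forall>n. X n \<in> UNIV - {0}" and X: "X \<longlonglongrightarrow> 0"
  obtain N where N: "\<And>n. n \<ge> N \<Longrightarrow> \<bar>X n\<bar> < 1"
    using tendstoD[OF X, of 1] by (auto simp: eventually_sequentially)
  define Y where "Y n = X (n + N)" for n
  have Y: "Y n \<noteq> 0" "\<bar>Y n\<bar> \<le> 1" for n
    using X0 N[of "n + N"] by (auto simp: Y_def)
  have "\<bar>(F (Y n) y - F 0 y) / Y n\<bar> \<le> G y" for n y
    using abs_diff_le_of_deriv_bound[OF der bnd Y(2)] Y(1) by (simp add: abs_divide field_simps)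
  then have "(\<lambda>n. \<integral>y. (F (Y n) y - F 0 y) / Y n \<partial>M) \<longlonglongrightarrow> (\<integral>y. F' 0 y \<partial>M)"
  proof (intro integral_dominated_convergence[where w=G] AE_I2)
    fix y
    have "((\<lambda>h. (F h y - F 0 y) / (h - 0)) \<longlongrightarrow> F' 0 y) (at 0)"
      using der[of y 0] unfolding has_field_derivative_iff .
    moreover have "Y \<longlonglongrightarrow> 0"
      unfolding Y_def by (rule LIMSEQ_ignore_initial_segment[OF X])
    ultimately show "(\<lambda>n. (F (Y n) y - F 0 y) / Y n) \<longlonglongrightarrow> F' 0 y"
      unfolding tendsto_at_iff_sequentially using Y(1) by (auto simp: comp_def)
  qed (use meas meas' intG in auto)
  moreover have "(\<integral>y. (F (Y n) y - F 0 y) / Y n \<partial>M)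
      = ((\<integral>y. F (Y n) y \<partial>M) - (\<integral>y. F 0 y \<partial>M)) / (Y n - 0)" for n
    using integrable_of_deriv_bound[OF der bnd meas intF intG Y(2)] intF by simp
  ultimately have "(\<lambda>n. ((\<integral>y. F (Y n) y \<partial>M) - (\<integral>y. F 0 y \<partial>M)) / (Y n - 0))
      \<longlonglongrightarrow> (\<integral>y. F' 0 y \<partial>M)"
    by (simp only:)
  then show "((\<lambda>h. ((\<lambda>s. \<integral>y. F s y \<partial>M) h - (\<lambda>s. \<integral>y. F s y \<partial>M) 0) / (h - 0)) \<circ> X)
      \<longlonglongrightarrow> (\<integral>y. F' 0 y \<partial>M)"
    unfolding comp_def Y_def by (rule LIMSEQ_offset)
qed

lemma pd_integral:
  fixes F F' :: "real^'n \<Rightarrow> 'a \<Rightarrow> real" and G :: "'a \<Rightarrow> real"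
  assumes der: "\<And>s y. ((\<lambda>s. F (z + s *\<^sub>R axis i 1) y) has_real_derivative F' (z + s *\<^sub>R axis i 1) y) (at s)"
    and meas: "\<And>z. F z \<in> borel_measurable M" "\<And>z. F' z \<in> borel_measurable M"
    and int: "integrable M (F z)" "integrable M G"
    and bnd: "\<And>s y. \<bar>s\<bar> \<le> 1 \<Longrightarrow> \<bar>F' (z + s *\<^sub>R axis i 1) y\<bar> \<le> G y"
  shows "pd i (\<lambda>z. c * (\<integral>y. F z y \<partial>M)) z = c * (\<integral>y. F' z y \<partial>M)"
proof -
  have "((\<lambda>s. \<integral>y. F (z + s *\<^sub>R axis i 1) y \<partial>M)
      has_real_derivative (\<integral>y. F' (z + 0 *\<^sub>R axis i 1) y \<partial>M)) (at 0)"
    by (rule has_real_derivative_integral[where F="\<lambda>s. F (z + s *\<^sub>R axis i 1)" and G=G])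
      (use der meas int bnd in auto)
  from DERIV_imp_deriv[OF DERIV_cmult[OF this, of c]] show ?thesis
    unfolding pd_def by simp
qed

section \<open>Derivatives of the heat-kernel representation\<close>

definition heat_integrand ::
  "real \<Rightarrow> (real^'n \<Rightarrow> real) \<Rightarrow> real^'n \<Rightarrow> real^'n \<Rightarrow> real" where
  "heat_integrand t g z y = g y * exp (- (norm (z - y))\<^sup>2 / (4 * t))"

definition heat_integrand_d ::
  "real \<Rightarrow> (real^'n \<Rightarrow> real) \<Rightarrow> 'n \<Rightarrow> real^'n \<Rightarrow> real^'n \<Rightarrow> real" where
  "heat_integrand_d t g j z y = heat_integrand t g z y * ((y - z) $ j / (2 * t))"

definition heat_integrand_dd ::
  "real \<Rightarrow> (real^'n \<Rightarrow> real) \<Rightarrow> 'n \<Rightarrow> 'n \<Rightarrow> real^'n \<Rightarrow> real^'n \<Rightarrow> real" where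
  "heat_integrand_dd t g i j z y = heat_integrand t g z y *
     ((y - z) $ i * ((y - z) $ j) / (4 * t\<^sup>2) - (if i = j then 1 / (2 * t) else 0))"

lemma heat_sol_eq_integral:
  "heat_sol g z t = 1 / (4 * pi * t) powr (real CARD('n) / 2) * (\<integral>y. heat_integrand t g z y \<partial>lborel)"
  for z :: "real^'n"
  unfolding heat_sol_def heat_integrand_def ..

lemma norm_add_axis_diff_sq:
  fixes z y :: "real^'n"
  shows "(norm (z + s *\<^sub>R axis i 1 - y))\<^sup>2 = (norm (z - y))\<^sup>2 + 2 * s * ((z - y) $ i) + s\<^sup>2"
proof -
  have "z + s *\<^sub>R axis i 1 - y = (z - y) + s *\<^sub>R axis i 1"
    by simp
  then show ?thesis
    unfolding power2_norm_eq_inner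
    by (simp add: inner_add_left inner_add_right inner_axis inner_axis' inner_axis_axis
        power2_eq_square algebra_simps)
qed

lemma vec_nth_diff_add_axis:
  "(y - (z + s *\<^sub>R axis i 1)) $ j = y $ j - z $ j - s * (if j = i then 1 else 0)"
  by (simp add: axis_def)

lemma heat_integrand_add_axis:
  "heat_integrand t g (z + s *\<^sub>R axis i 1) y
     = g y * exp (- ((norm (z - y))\<^sup>2 + 2 * s * ((z - y) $ i) + s\<^sup>2) / (4 * t))"
  unfolding heat_integrand_def norm_add_axis_diff_sq ..

lemma has_real_derivative_heat_integrand:
  assumes t: "t > 0"
  shows "((\<lambda>s. heat_integrand t g (z + s *\<^sub>R axis i 1) y)
    has_real_derivative heat_integrand_d t g i (z + s *\<^sub>R axis i 1) y) (at s)"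
proof -
  define N where "N = (norm (z - y))\<^sup>2"
  define a where "a = (z - y) $ i"
  have "((\<lambda>s. g y * exp (- (N + 2 * s * a + s\<^sup>2) / (4 * t))) has_real_derivative
      g y * (exp (- (N + 2 * s * a + s\<^sup>2) / (4 * t)) * (- (2 * a + 2 * s) / (4 * t)))) (at s)"
    using t by (auto intro!: derivative_eq_intros simp: field_simps)
  moreover have "g y * (exp (- (N + 2 * s * a + s\<^sup>2) / (4 * t)) * (- (2 * a + 2 * s) / (4 * t)))
      = heat_integrand_d t g i (z + s *\<^sub>R axis i 1) y"
    unfolding heat_integrand_d_def heat_integrand_add_axis vec_nth_diff_add_axis N_def a_def
    using t by (simp add: field_simps)
  ultimately show ?thesis
    unfolding heat_integrand_add_axis N_def a_def by simp
qed

lemma has_real_derivative_heat_integrand_d: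
  assumes t: "t > 0"
  shows "((\<lambda>s. heat_integrand_d t g j (z + s *\<^sub>R axis i 1) y)
    has_real_derivative heat_integrand_dd t g i j (z + s *\<^sub>R axis i 1) y) (at s)"
proof -
  define N where "N = (norm (z - y))\<^sup>2"
  define a where "a = (z - y) $ i"
  define d where "d = (if j = i then 1 else 0 :: real)"
  define c where "c = y $ j - z $ j"
  define E where "E s = exp (- (N + 2 * s * a + s\<^sup>2) / (4 * t))" for s
  have eq: "heat_integrand_d t g j (z + s *\<^sub>R axis i 1) y = g y * E s * ((c - s * d) / (2 * t))" for s
    unfolding heat_integrand_d_def heat_integrand_add_axis vec_nth_diff_add_axis N_def a_def c_def d_def E_def
    by simp
  have "((\<lambda>s. g y * E s * ((c - s * d) / (2 * t))) has_real_derivative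
      g y * (E s * (- (2 * a + 2 * s) / (4 * t))) * ((c - s * d) / (2 * t)) + g y * E s * (- d / (2 * t))) (at s)"
    unfolding E_def using t by (auto intro!: derivative_eq_intros simp: field_simps)
  moreover have "g y * (E s * (- (2 * a + 2 * s) / (4 * t))) * ((c - s * d) / (2 * t)) + g y * E s * (- d / (2 * t))
      = heat_integrand_dd t g i j (z + s *\<^sub>R axis i 1) y"
    unfolding heat_integrand_dd_def heat_integrand_add_axis vec_nth_diff_add_axis N_def a_def c_def d_def E_def
    using t by (auto simp: field_simps power2_eq_square)
  ultimately show ?thesis
    unfolding eq by simp
qed

lemma heat_integrand_measurable:
  fixes z :: "real^'n"
  assumes "continuous_on UNIV g"
  shows "heat_integrand t g z \<in> borel_measurable lborel"
    and "heat_integrand_d t g j z \<in> borel_measurable lborel"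
    and "heat_integrand_dd t g i j z \<in> borel_measurable lborel"
proof -
  have [measurable]: "g \<in> borel_measurable borel"
    using assms by (rule borel_measurable_continuous_onI)
  have [measurable]: "(\<lambda>y::real^'n. (y - z) $ k) \<in> borel_measurable borel" for k
    by (intro borel_measurable_continuous_onI continuous_intros)
  show "heat_integrand t g z \<in> borel_measurable lborel"
    unfolding heat_integrand_def[abs_def] by measurable
  then show "heat_integrand_d t g j z \<in> borel_measurable lborel"
    and "heat_integrand_dd t g i j z \<in> borel_measurable lborel"
    unfolding heat_integrand_d_def[abs_def] heat_integrand_dd_def[abs_def] by measurable
qed

definition heat_bound_const :: "real \<Rightarrow> real" where
  "heat_bound_const t = 1 + 1 / (4 * t\<^sup>2) + 1 / t"

text \<open>Halving the decay rate of the Gaussian absorbs both a shift of \<open>z\<close> by at most one and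
  a quadratically growing factor; this gives one integrable majorant for the integrand and its
  first two derivatives near \<open>z\<close>.\<close>

definition heat_majorant :: "real \<Rightarrow> real \<Rightarrow> real^'n \<Rightarrow> real^'n \<Rightarrow> real" where
  "heat_majorant t B z y = B * exp (1 / (2 * t)) * heat_bound_const t *
     (exp (- (1 / (8 * t)) * (norm (z - y))\<^sup>2) * (1 + norm (z - y))\<^sup>2)"

lemma integrable_heat_majorant: "t > 0 \<Longrightarrow> integrable lborel (heat_majorant t B z)"
  unfolding heat_majorant_def using integrable_gaussian_mult_square[of "1 / (8 * t)" z] by simp

lemma exp_heat_add_axis_le:
  fixes z y :: "real^'n"
  assumes t: "t > 0" and s: "\<bar>s\<bar> \<le> 1"
  shows "exp (- (norm (z + s *\<^sub>R axis i 1 - y))\<^sup>2 / (4 * t))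
    \<le> exp (1 / (2 * t)) * exp (- (1 / (8 * t)) * (norm (z - y))\<^sup>2)"
proof -
  define r where "r = norm (z - y)"
  define a where "a = (z - y) $ i"
  have "\<bar>a\<bar> \<le> r"
    unfolding a_def r_def by (rule component_le_norm_cart)
  then have "\<bar>s\<bar> * \<bar>a\<bar> \<le> 1 * r"
    using s by (intro mult_mono) auto
  then have "\<bar>s * a\<bar> \<le> r"
    by (simp add: abs_mult)
  then have "- r \<le> s * a"
    by (simp add: abs_le_iff)
  moreover have "0 \<le> r\<^sup>2 - 4 * r + 4"
    using zero_le_power2[of "r - 2"] by (simp add: power2_eq_square algebra_simps)
  ultimately have "r\<^sup>2 + 4 * s * a + 2 * s\<^sup>2 + 4 \<ge> 0"
    using zero_le_power2[of s] by linarith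
  moreover have "1 / (2 * t) + (- (1 / (8 * t)) * r\<^sup>2) - (- (r\<^sup>2 + 2 * s * a + s\<^sup>2) / (4 * t))
      = (r\<^sup>2 + 4 * s * a + 2 * s\<^sup>2 + 4) / (8 * t)"
    using t by (simp add: field_simps)
  ultimately have "- (r\<^sup>2 + 2 * s * a + s\<^sup>2) / (4 * t) \<le> 1 / (2 * t) + (- (1 / (8 * t)) * r\<^sup>2)"
    using t by (smt (verit) divide_nonneg_pos)
  then show ?thesis
    unfolding norm_add_axis_diff_sq r_def[symmetric] a_def[symmetric] exp_add[symmetric] by simp
qed

lemma abs_vec_nth_diff_add_axis_le:
  fixes z y :: "real^'n"
  assumes "\<bar>s\<bar> \<le> 1"
  shows "\<bar>(y - (z + s *\<^sub>R axis i 1)) $ j\<bar> \<le> 1 + norm (z - y)"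
proof -
  have "\<bar>(y - z) $ j\<bar> \<le> norm (z - y)"
    using component_le_norm_cart[of "y - z" j] by (simp add: norm_minus_commute)
  then show ?thesis
    unfolding vec_nth_diff_add_axis using assms by (cases "j = i") (auto simp: abs_le_iff)
qed

lemma abs_heat_drift_le:
  fixes z y :: "real^'n"
  assumes t: "t > 0" and s: "\<bar>s\<bar> \<le> 1"
  shows "\<bar>(y - (z + s *\<^sub>R axis i 1)) $ j / (2 * t)\<bar> \<le> heat_bound_const t * (1 + norm (z - y))\<^sup>2"
proof -
  define r where "r = norm (z - y)"
  have "1 + r \<le> (1 + r)\<^sup>2"
    by (simp add: r_def power2_eq_square algebra_simps)
  then have "\<bar>(y - (z + s *\<^sub>R axis i 1)) $ j\<bar> \<le> (1 + r)\<^sup>2"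
    using abs_vec_nth_diff_add_axis_le[OF s, of y z i j] unfolding r_def by linarith
  moreover have "1 / (2 * t) \<le> heat_bound_const t"
    using t by (simp add: heat_bound_const_def field_simps)
  ultimately have "\<bar>(y - (z + s *\<^sub>R axis i 1)) $ j\<bar> * (1 / (2 * t)) \<le> (1 + r)\<^sup>2 * heat_bound_const t"
    using t by (intro mult_mono) auto
  then show ?thesis
    using t by (simp add: r_def abs_divide mult.commute)
qed

lemma abs_heat_drift_product_le:
  fixes z y :: "real^'n"
  assumes t: "t > 0" and s: "\<bar>s\<bar> \<le> 1"
  shows "\<bar>(y - (z + s *\<^sub>R axis k 1)) $ i * ((y - (z + s *\<^sub>R axis k 1)) $ j) / (4 * t\<^sup>2)
      - (if i = j then 1 / (2 * t) else 0)\<bar> \<le> heat_bound_const t * (1 + norm (z - y))\<^sup>2"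
proof -
  define r where "r = norm (z - y)"
  define p where "p = (y - (z + s *\<^sub>R axis k 1)) $ i"
  define q where "q = (y - (z + s *\<^sub>R axis k 1)) $ j"
  have "\<bar>p\<bar> \<le> 1 + r" "\<bar>q\<bar> \<le> 1 + r"
    unfolding p_def q_def r_def using abs_vec_nth_diff_add_axis_le[OF s] by auto
  moreover have "1 \<le> (1 + r)\<^sup>2"
    by (simp add: r_def power2_eq_square algebra_simps)
  ultimately have pq: "\<bar>p * q\<bar> \<le> (1 + r)\<^sup>2" "1 / (2 * t) \<le> 1 / (2 * t) * (1 + r)\<^sup>2"
    using t mult_left_mono[of 1 "(1 + r)\<^sup>2" "1 / (2 * t)"]
    unfolding abs_mult power2_eq_square by (auto intro: mult_mono simp: r_def)
  have "\<bar>p * q / (4 * t\<^sup>2) - (if i = j then 1 / (2 * t) else 0)\<bar> \<le> \<bar>p * q\<bar> / (4 * t\<^sup>2) + 1 / (2 * t)"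
    using abs_triangle_ineq4[of "p * q / (4 * t\<^sup>2)" "if i = j then 1 / (2 * t) else 0"] t
    by (auto simp: abs_divide)
  also have "\<dots> \<le> (1 / (4 * t\<^sup>2) + 1 / (2 * t)) * (1 + r)\<^sup>2"
    using pq divide_right_mono[OF pq(1), of "4 * t\<^sup>2"] by (simp add: distrib_right)
  also have "\<dots> \<le> heat_bound_const t * (1 + r)\<^sup>2"
    using t by (intro mult_right_mono) (simp_all add: heat_bound_const_def field_simps)
  finally show ?thesis
    by (simp add: r_def p_def q_def)
qed

lemma abs_heat_integrand_mult_le:
  fixes z y :: "real^'n"
  assumes t: "t > 0" and s: "\<bar>s\<bar> \<le> 1" and gB: "\<And>y. \<bar>g y\<bar> \<le> B"
    and P: "\<bar>P\<bar> \<le> heat_bound_const t * (1 + norm (z - y))\<^sup>2"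
  shows "\<bar>heat_integrand t g (z + s *\<^sub>R axis i 1) y * P\<bar> \<le> heat_majorant t B z y"
proof -
  have "\<bar>heat_integrand t g (z + s *\<^sub>R axis i 1) y * P\<bar>
      = \<bar>g y\<bar> * exp (- (norm (z + s *\<^sub>R axis i 1 - y))\<^sup>2 / (4 * t)) * \<bar>P\<bar>"
    by (simp add: heat_integrand_def abs_mult)
  also have "\<dots> \<le> B * (exp (1 / (2 * t)) * exp (- (1 / (8 * t)) * (norm (z - y))\<^sup>2))
      * (heat_bound_const t * (1 + norm (z - y))\<^sup>2)"
    using order.trans[OF abs_ge_zero gB[of y]]
    by (intro mult_mono gB exp_heat_add_axis_le[OF t s] P mult_nonneg_nonneg) auto
  also have "\<dots> = heat_majorant t B z y"
    by (simp add: heat_majorant_def algebra_simps)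
  finally show ?thesis .
qed

lemma integrable_heat_integrand_mult:
  fixes z :: "real^'n"
  assumes t: "t > 0" and gc: "continuous_on UNIV g" and gB: "\<And>y. \<bar>g y\<bar> \<le> B"
    and Pm: "P \<in> borel_measurable lborel"
    and P: "\<And>y. \<bar>P y\<bar> \<le> heat_bound_const t * (1 + norm (z - y))\<^sup>2"
  shows "integrable lborel (\<lambda>y. heat_integrand t g z y * P y)"
proof (rule Bochner_Integration.integrable_bound[OF integrable_heat_majorant[OF t]])
  show "(\<lambda>y. heat_integrand t g z y * P y) \<in> borel_measurable lborel"
    using heat_integrand_measurable(1)[OF gc] Pm by measurable
  show "AE y in lborel. norm (heat_integrand t g z y * P y) \<le> norm (heat_majorant t B z y)"
    using abs_heat_integrand_mult_le[OF t _ gB P, of 0] by (auto intro!: AE_I2 order_trans[OF _ abs_ge_self])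
qed

lemma integrable_heat_integrand:
  fixes z :: "real^'n"
  assumes t: "t > 0" and gc: "continuous_on UNIV g" and gB: "\<And>y. \<bar>g y\<bar> \<le> B"
  shows "integrable lborel (heat_integrand t g z)"
proof -
  have "1 * 1 \<le> heat_bound_const t * (1 + norm (z - y))\<^sup>2" for y
    using t by (intro mult_mono) (simp_all add: heat_bound_const_def power2_eq_square algebra_simps)
  then show ?thesis
    using integrable_heat_integrand_mult[OF t gc gB, of "\<lambda>_. 1" z] by simp
qed

lemma pd_heat_sol:
  fixes g :: "real^'n \<Rightarrow> real"
  assumes t: "t > 0" and gc: "continuous_on UNIV g" and gB: "\<And>y. \<bar>g y\<bar> \<le> B"
  shows "pd i (\<lambda>z. heat_sol g z t) z
    = 1 / (4 * pi * t) powr (real CARD('n) / 2) * (\<integral>y. heat_integrand_d t g i z y \<partial>lborel)"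
  unfolding heat_sol_eq_integral
proof (rule pd_integral[where G="heat_majorant t B z"])
  show "\<bar>heat_integrand_d t g i (z + s *\<^sub>R axis i 1) y\<bar> \<le> heat_majorant t B z y" if "\<bar>s\<bar> \<le> 1" for s y
    unfolding heat_integrand_d_def
    by (rule abs_heat_integrand_mult_le[OF t that gB abs_heat_drift_le[OF t that]])
qed (use has_real_derivative_heat_integrand[OF t] heat_integrand_measurable[OF gc]
      integrable_heat_integrand[OF t gc gB] integrable_heat_majorant[OF t] in auto)

lemma pd_pd_heat_sol:
  fixes g :: "real^'n \<Rightarrow> real"
  assumes t: "t > 0" and gc: "continuous_on UNIV g" and gB: "\<And>y. \<bar>g y\<bar> \<le> B"
  shows "pd i (pd j (\<lambda>z. heat_sol g z t)) z
    = 1 / (4 * pi * t) powr (real CARD('n) / 2) * (\<integral>y. heat_integrand_dd t g i j z y \<partial>lborel)"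
  unfolding pd_heat_sol[OF t gc gB]
proof (rule pd_integral[where G="heat_majorant t B z"])
  show "integrable lborel (heat_integrand_d t g j z)"
    unfolding heat_integrand_d_def[abs_def]
    using abs_heat_drift_le[OF t, of 0] t
    by (intro integrable_heat_integrand_mult[OF t gc gB]) auto
  show "\<bar>heat_integrand_dd t g i j (z + s *\<^sub>R axis i 1) y\<bar> \<le> heat_majorant t B z y" if "\<bar>s\<bar> \<le> 1" for s y
    unfolding heat_integrand_dd_def
    by (rule abs_heat_integrand_mult_le[OF t that gB abs_heat_drift_product_le[OF t that]])
qed (use has_real_derivative_heat_integrand_d[OF t] heat_integrand_measurable[OF gc]
      integrable_heat_majorant[OF t] in auto)

lemma heat_sol_moments:
  fixes g :: "real^'n \<Rightarrow> real" and x :: "real^'n"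
  assumes t: "t > 0" and gc: "continuous_on UNIV g" and gB: "\<And>y. \<bar>g y\<bar> \<le> B"
  defines "c \<equiv> 1 / (4 * pi * t) powr (real CARD('n) / 2)"
    and "w \<equiv> heat_integrand t g x" and "b \<equiv> \<lambda>y i. (y - x) $ i / (2 * t)"
  shows "integrable lborel w" and "integrable lborel (\<lambda>y. w y * b y i)"
    and "integrable lborel (\<lambda>y. w y * (b y i * b y j))"
    and "heat_sol g x t = c * (\<integral>y. w y \<partial>lborel)"
    and "pd i (\<lambda>z. heat_sol g z t) x = c * (\<integral>y. w y * b y i \<partial>lborel)"
    and "pd i (pd j (\<lambda>z. heat_sol g z t)) x
      = c * ((\<integral>y. w y * (b y i * b y j) \<partial>lborel) - (if i = j then 1 / (2 * t) * (\<integral>y. w y \<partial>lborel) else 0))"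
proof -
  have "(\<lambda>y::real^'n. (y - x) $ k / (2 * t)) \<in> borel_measurable borel" for k
    using t by (intro borel_measurable_continuous_onI continuous_intros) auto
  then have b_measurable: "(\<lambda>y. b y k) \<in> borel_measurable lborel" for k
    unfolding b_def by simp
  show iw: "integrable lborel w"
    unfolding w_def by (rule integrable_heat_integrand[OF t gc gB])
  show "integrable lborel (\<lambda>y. w y * b y i)"
    unfolding w_def using b_measurable abs_heat_drift_le[OF t, of 0 _ x]
    by (intro integrable_heat_integrand_mult[OF t gc gB]) (auto simp: b_def)
  define \<delta> where "\<delta> = (if i = j then 1 / (2 * t) else 0)"
  have "integrable lborel (\<lambda>y. w y * (b y i * b y j - \<delta>))"
    unfolding w_def using b_measurable abs_heat_drift_product_le[OF t, of 0 _ x] t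
    by (intro integrable_heat_integrand_mult[OF t gc gB]) (auto simp: b_def \<delta>_def power2_eq_square)
  moreover have "w y * (b y i * b y j) = w y * (b y i * b y j - \<delta>) + \<delta> * w y" for y
    by (simp add: algebra_simps)
  ultimately show ibb: "integrable lborel (\<lambda>y. w y * (b y i * b y j))"
    using iw by simp
  show "heat_sol g x t = c * (\<integral>y. w y \<partial>lborel)"
    unfolding heat_sol_eq_integral c_def w_def ..
  show "pd i (\<lambda>z. heat_sol g z t) x = c * (\<integral>y. w y * b y i \<partial>lborel)"
    unfolding pd_heat_sol[OF t gc gB] c_def w_def b_def heat_integrand_d_def ..
  have "heat_integrand_dd t g i j x = (\<lambda>y. w y * (b y i * b y j) - \<delta> * w y)"
    unfolding heat_integrand_dd_def w_def b_def \<delta>_def by (simp add: fun_eq_iff algebra_simps power2_eq_square)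
  then have "(\<integral>y. heat_integrand_dd t g i j x y \<partial>lborel)
      = (\<integral>y. w y * (b y i * b y j) \<partial>lborel) - \<delta> * (\<integral>y. w y \<partial>lborel)"
    using ibb iw by simp
  then show "pd i (pd j (\<lambda>z. heat_sol g z t)) x
      = c * ((\<integral>y. w y * (b y i * b y j) \<partial>lborel) - (if i = j then 1 / (2 * t) * (\<integral>y. w y \<partial>lborel) else 0))"
    unfolding pd_pd_heat_sol[OF t gc gB] c_def[symmetric] by (simp add: \<delta>_def)
qed

lemma li_yau_quotient_heat_sol_ge:
  fixes g :: "real^'n \<Rightarrow> real" and x :: "real^'n"
  assumes t: "t > 0" and gc: "continuous_on UNIV g" and gB: "\<And>y. \<bar>g y\<bar> \<le> B"
    and g0: "\<And>y. g y \<ge> 0"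
    and "\<alpha> \<ge> 0" "\<beta> \<ge> 0" "\<gamma> \<ge> 0" "(real CARD('n) - 1) * (\<alpha> + \<beta>) + \<gamma> \<le> 1"
  shows "- real CARD('n) / (2 * t) \<le> li_yau_quotient \<alpha> \<beta> \<gamma> (heat_sol g x t)
    (\<lambda>i. pd i (\<lambda>z. heat_sol g z t) x) (\<lambda>i j. pd i (pd j (\<lambda>z. heat_sol g z t)) x)"
proof -
  define c where "c = 1 / (4 * pi * t) powr (real CARD('n) / 2)"
  define w where "w = heat_integrand t g x"
  define b where "b y i = (y - x) $ i / (2 * t)" for y i
  define M where "M = (\<integral>y. w y \<partial>lborel)"
  define m where "m i = (\<integral>y. w y * b y i \<partial>lborel)" for i
  define S where "S i j = (\<integral>y. w y * (b y i * b y j) \<partial>lborel)" for i j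
  note moments = heat_sol_moments[OF t gc gB, where x=x, folded c_def w_def, folded b_def M_def m_def]
  have "- real CARD('n) / (2 * t) \<le> li_yau_quotient \<alpha> \<beta> \<gamma> (c * M) (\<lambda>i. c * m i)
      (\<lambda>i j. c * (S i j - (if i = j then 1 / (2 * t) * M else 0)))"
  proof (cases "M = 0")
    case True
    \<comment> \<open>Then every quotient is 0 by \<open>x / 0 = 0\<close>; this is why the theorem does not need
      \<open>g\<close> to be nonzero somewhere.\<close>
    then show ?thesis
      using t by (simp add: li_yau_quotient_def)
  next
    case False
    moreover have w0: "w y \<ge> 0" for y
      unfolding w_def heat_integrand_def using g0 by simp
    ultimately have "M > 0"
      unfolding M_def by (simp add: integral_nonneg_AE order_less_le)
    have "0 \<le> li_yau_quotient \<alpha> \<beta> \<gamma> M m S"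
      unfolding M_def m_def S_def
      by (rule li_yau_quotient_moments_nonneg[OF assms(5-8) w0])
        (use \<open>M > 0\<close> moments(1-3) in \<open>simp_all add: M_def\<close>)
    moreover have "c \<noteq> 0"
      using t by (simp add: c_def)
    ultimately show ?thesis
      using \<open>M > 0\<close> by (simp add: li_yau_quotient_scale li_yau_quotient_diag_shift)
  qed
  then show ?thesis
    unfolding moments(4-6) S_def .
qed

theorem theorem2p1:
  fixes g :: "real^'n \<Rightarrow> real" and \<alpha> \<beta> \<gamma> :: real
  assumes "continuous_on UNIV g"
    and "bounded (range g)"
    and "\<And>y. g y \<ge> 0"
    and "\<exists>y. g y \<noteq> 0"
    and "\<alpha> \<ge> 0" and "\<beta> \<ge> 0" and "\<gamma> \<ge> 0"
    and "(real CARD('n) - 1) * (\<alpha> + \<beta>) + \<gamma> \<le> 1"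
  shows "\<And>x t. t > 0 \<Longrightarrow>
    (let u = (\<lambda>z. heat_sol g z t) in
       (\<Sum>i\<in>UNIV. pd i (pd i u) x) / u x
       - \<alpha> * (\<Sum>i\<in>UNIV. \<Sum>j\<in>UNIV - {i}. pd i (pd j u) x / u x)
       - \<beta> * (\<Sum>i\<in>UNIV. \<Sum>j\<in>UNIV - {i}. pd i u x * pd j u x / (u x)\<^sup>2)
       - \<gamma> * (\<Sum>i\<in>UNIV. (pd i u x)\<^sup>2) / (u x)\<^sup>2
     \<ge> - real CARD('n) / (2 * t))"
proof -
  fix x :: "real^'n" and t :: real
  assume "t > 0"
  from assms(2) obtain B where "\<And>y. \<bar>g y\<bar> \<le> B"
    unfolding bounded_iff by auto
  from li_yau_quotient_heat_sol_ge[OF \<open>t > 0\<close> assms(1) this assms(3,5-8)]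
  show "?thesis x t"
    unfolding Let_def li_yau_quotient_def .
qed

end
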